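(* Let $M$ be a valued field and $c=(c_0,\dots,c_{n-1})$ a tuple of elements of $\mathrm{Cut}$. For every invertible upper triangular matrix $a=(a_{i,j})\in B_n$, we have $a\in\mathrm{Stab}(\Lambda_c)$ if and only if $a_{i,i}\in\mathcal{O}_{\Delta_{c_i}}^\times$ for all $i<n$, and $a_{i,j}\in(I_{c_i}:I_{c_j})$ for all $i<j<n$.
   Context: $\mathcal{O}$ is the valuation ring, $v$ the valuation, $\Gamma$ the value group. $(C_c)_{c\in\mathrm{Cut}}$ is a fixed (ind-)definable family of cuts (upward closed subsets) of $\Gamma$ such that every $M$-definable cut equals $C_c$ for a unique $c$; $I_c=\{x\in K:v(x)\in C_c\}$ and $\Delta_c=\{\gamma\in\Gamma:\gamma+C_c=C_c\}$, a convex subgroup. For a convex subgroup $\Delta$, $\mathcal{O}_\Delta=\{x\in K:v(x)\in\Delta\}$ and $\mathcal{O}_\Delta^\times=\{x: v(x)\in\Delta\}$ is its unit group. For $\mathcal{O}$-submodules $I,J$ of $K$, $(I:J)=\{x\in K:xJ\subseteq I\}$. $\Lambda_c=\sum_iI_{c_i}e_i\subseteq K^n$ with $(e_i)$ the standard basis; $B_n$ acts on subsets of $K^n$ and $\mathrm{Stab}(\Lambda_c)=\{a\in B_n:a\Lambda_c=\Lambda_c\}$. *)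

theory Defs
  imports Main
begin

text \<open>The valuation is
  given on nonzero elements; v(0) = infinity is handled by treating 0 separately.
  The value group Gamma is the whole type 'g (v is onto on nonzero elements).\<close>
definition valuation :: "('k::field \<Rightarrow> 'g::linordered_ab_group_add) \<Rightarrow> bool" where
  "valuation v \<longleftrightarrow>
     (\<forall>x y. x \<noteq> 0 \<longrightarrow> y \<noteq> 0 \<longrightarrow> v (x * y) = v x + v y) \<and>
     (\<forall>x y. x \<noteq> 0 \<longrightarrow> y \<noteq> 0 \<longrightarrow> x + y \<noteq> 0 \<longrightarrow> min (v x) (v y) \<le> v (x + y)) \<and>
     (\<forall>\<gamma>. \<exists>x. x \<noteq> 0 \<and> v x = \<gamma>)"

definition is_cut :: "'g::linordered_ab_group_add set \<Rightarrow> bool" where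
  "is_cut C \<longleftrightarrow> (\<forall>\<gamma> \<delta>. \<gamma> \<in> C \<longrightarrow> \<gamma> \<le> \<delta> \<longrightarrow> \<delta> \<in> C)"

text \<open>I_C = {x : v(x) \<in> C}, where v(0) = infinity belongs to every cut.\<close>
definition I_cut :: "('k::field \<Rightarrow> 'g::linordered_ab_group_add) \<Rightarrow> 'g set \<Rightarrow> 'k set" where
  "I_cut v C = {x. x = 0 \<or> v x \<in> C}"

definition Delta_cut :: "'g::linordered_ab_group_add set \<Rightarrow> 'g set" where
  "Delta_cut C = {\<gamma>. (\<lambda>\<delta>. \<gamma> + \<delta>) ` C = C}"

text \<open>Units of O_Delta: {x : v(x) \<in> Delta} (v(0) = infinity is never in Delta).\<close>
definition O_units :: "('k::field \<Rightarrow> 'g::linordered_ab_group_add) \<Rightarrow> 'g set \<Rightarrow> 'k set" where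
  "O_units v \<Delta> = {x. x \<noteq> 0 \<and> v x \<in> \<Delta>}"

definition colon :: "'k::field set \<Rightarrow> 'k set \<Rightarrow> 'k set" where
  "colon I J = {x. \<forall>y\<in>J. x * y \<in> I}"

text \<open>n x n matrices are functions nat \<Rightarrow> nat \<Rightarrow> 'k, only entries with indices < n matter;
  vectors of K^n are functions nat \<Rightarrow> 'k vanishing outside {0..<n}.\<close>
definition mat_mult :: "nat \<Rightarrow> (nat \<Rightarrow> nat \<Rightarrow> 'k::field) \<Rightarrow> (nat \<Rightarrow> nat \<Rightarrow> 'k) \<Rightarrow> nat \<Rightarrow> nat \<Rightarrow> 'k" where
  "mat_mult n a b = (\<lambda>i k. \<Sum>j<n. a i j * b j k)"

definition mat_invertible :: "nat \<Rightarrow> (nat \<Rightarrow> nat \<Rightarrow> 'k::field) \<Rightarrow> bool" where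
  "mat_invertible n a \<longleftrightarrow> (\<exists>b. \<forall>i<n. \<forall>k<n.
      mat_mult n a b i k = (if i = k then 1 else 0) \<and> mat_mult n b a i k = (if i = k then 1 else 0))"

definition upper_triangular :: "nat \<Rightarrow> (nat \<Rightarrow> nat \<Rightarrow> 'k::field) \<Rightarrow> bool" where
  "upper_triangular n a \<longleftrightarrow> (\<forall>i<n. \<forall>j<n. j < i \<longrightarrow> a i j = 0)"

definition B_mat :: "nat \<Rightarrow> (nat \<Rightarrow> nat \<Rightarrow> 'k::field) set" where
  "B_mat n = {a. upper_triangular n a \<and> mat_invertible n a}"

definition mat_act :: "nat \<Rightarrow> (nat \<Rightarrow> nat \<Rightarrow> 'k::field) \<Rightarrow> (nat \<Rightarrow> 'k) \<Rightarrow> nat \<Rightarrow> 'k" where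
  "mat_act n a x = (\<lambda>i. if i < n then (\<Sum>j<n. a i j * x j) else 0)"

definition Lambda :: "('k::field \<Rightarrow> 'g::linordered_ab_group_add) \<Rightarrow> nat \<Rightarrow> (nat \<Rightarrow> 'g set) \<Rightarrow> (nat \<Rightarrow> 'k) set" where
  "Lambda v n C = {x. (\<forall>i<n. x i \<in> I_cut v (C i)) \<and> (\<forall>i\<ge>n. x i = 0)}"

definition Stab :: "nat \<Rightarrow> (nat \<Rightarrow> 'k::field) set \<Rightarrow> (nat \<Rightarrow> nat \<Rightarrow> 'k) set" where
  "Stab n L = {a \<in> B_mat n. mat_act n a ` L = L}"

end

theory Submission
  imports Defs
begin

text \<open>The stabiliser condition splits into the two inclusions \<open>a\<Lambda> \<subseteq> \<Lambda>\<close> and \<open>\<Lambda> \<subseteq> a\<Lambda>\<close>.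
  Testing on the vectors \<open>y e\<^sub>j\<close> shows that \<open>a\<Lambda> \<subseteq> \<Lambda>\<close> holds iff \<open>a\<^sub>i\<^sub>j I\<^sub>j \<subseteq> I\<^sub>i\<close> for all
  \<open>i, j\<close>, which is automatic below the diagonal. Given the off-diagonal conditions, back
  substitution shows that \<open>\<Lambda> \<subseteq> a\<Lambda>\<close> holds iff moreover \<open>a\<^sub>i\<^sub>i\<^sup>-\<^sup>1 I\<^sub>i \<subseteq> I\<^sub>i\<close>. Since \<open>v\<close> is
  onto \<open>\<Gamma>\<close>, the two diagonal inclusions \<open>a\<^sub>i\<^sub>i\<^sup>\<plusminus>\<^sup>1 I\<^sub>i \<subseteq> I\<^sub>i\<close> say exactly that
  \<open>v(a\<^sub>i\<^sub>i) + C\<^sub>i = C\<^sub>i\<close>.\<close>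

lemma valuation_mult:
  "valuation v \<Longrightarrow> x \<noteq> 0 \<Longrightarrow> y \<noteq> 0 \<Longrightarrow> v (x * y) = v x + v y"
  unfolding valuation_def by blast

lemma valuation_surj: "valuation v \<Longrightarrow> \<exists>x. x \<noteq> 0 \<and> v x = \<gamma>"
  unfolding valuation_def by blast

lemma valuation_one: "valuation v \<Longrightarrow> v 1 = 0"
  using valuation_mult[of v 1 1] by simp

lemma valuation_minus_one:
  assumes "valuation v"
  shows "v (-1) = 0"
proof -
  have "v (-1) + v (-1) = 0"
    using valuation_mult[OF assms, of "-1" "-1"] valuation_one[OF assms] by simp
  then show ?thesis
    by (metis add_neg_neg add_pos_pos less_irrefl linorder_neqE)
qed

lemma valuation_uminus: "valuation v \<Longrightarrow> x \<noteq> 0 \<Longrightarrow> v (- x) = v x"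
  using valuation_mult[of v "-1" x] valuation_minus_one[of v] by simp

lemma valuation_inverse:
  assumes "valuation v" "x \<noteq> 0"
  shows "v (inverse x) = - v x"
proof -
  have "v x + v (inverse x) = v 1"
    using valuation_mult[OF assms(1), of x "inverse x"] assms(2) by simp
  then show ?thesis
    using valuation_one[OF assms(1)] by (simp add: eq_neg_iff_add_eq_0 add.commute)
qed

lemma I_cut_zero [simp]: "0 \<in> I_cut v C"
  unfolding I_cut_def by simp

lemma I_cut_add:
  assumes "valuation v" "is_cut C" "x \<in> I_cut v C" "y \<in> I_cut v C"
  shows "x + y \<in> I_cut v C"
proof (cases "x = 0 \<or> y = 0 \<or> x + y = 0")
  case False
  then have "min (v x) (v y) \<le> v (x + y)"
    using assms(1) unfolding valuation_def by blast
  moreover have "min (v x) (v y) \<in> C"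
    using assms(3,4) False unfolding I_cut_def min_def by auto
  ultimately show ?thesis
    using assms(2) unfolding is_cut_def I_cut_def by blast
qed (use assms in auto)

lemma I_cut_uminus: "valuation v \<Longrightarrow> x \<in> I_cut v C \<Longrightarrow> - x \<in> I_cut v C"
  unfolding I_cut_def by (cases "x = 0") (auto simp: valuation_uminus)

lemma I_cut_diff:
  "valuation v \<Longrightarrow> is_cut C \<Longrightarrow> x \<in> I_cut v C \<Longrightarrow> y \<in> I_cut v C \<Longrightarrow> x - y \<in> I_cut v C"
  using I_cut_add[of v C x "- y"] I_cut_uminus[of v y C] by simp

lemma I_cut_sum:
  assumes "valuation v" "is_cut C" "\<And>j. j \<in> S \<Longrightarrow> f j \<in> I_cut v C"
  shows "sum f S \<in> I_cut v C"
  using assms(3)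
  by (induction S rule: infinite_finite_induct) (auto intro: I_cut_add[OF assms(1,2)])

lemma shift_image_eq_iff:
  fixes C :: "'g::ab_group_add set"
  shows "(\<lambda>\<delta>. g + \<delta>) ` C = C \<longleftrightarrow>
        (\<lambda>\<delta>. g + \<delta>) ` C \<subseteq> C \<and> (\<lambda>\<delta>. - g + \<delta>) ` C \<subseteq> C"
proof -
  have "C \<subseteq> (\<lambda>\<delta>. g + \<delta>) ` C \<longleftrightarrow> (\<lambda>\<delta>. - g + \<delta>) ` C \<subseteq> C"
  proof
    assume "C \<subseteq> (\<lambda>\<delta>. g + \<delta>) ` C"
    then show "(\<lambda>\<delta>. - g + \<delta>) ` C \<subseteq> C"
      by (auto simp: subset_iff image_iff add.assoc[symmetric])
  next
    assume "(\<lambda>\<delta>. - g + \<delta>) ` C \<subseteq> C"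
    then have "(\<lambda>\<delta>. g + \<delta>) ` (\<lambda>\<delta>. - g + \<delta>) ` C \<subseteq> (\<lambda>\<delta>. g + \<delta>) ` C"
      by (rule image_mono)
    then show "C \<subseteq> (\<lambda>\<delta>. g + \<delta>) ` C"
      by (simp add: image_image)
  qed
  then show ?thesis by blast
qed

lemma O_units_Delta_cut_iff:
  assumes v: "valuation v" and "c \<noteq> 0"
  shows "c \<in> O_units v (Delta_cut C) \<longleftrightarrow>
         c \<in> colon (I_cut v C) (I_cut v C) \<and> inverse c \<in> colon (I_cut v C) (I_cut v C)"
    (is "_ \<longleftrightarrow> c \<in> ?Q \<and> inverse c \<in> ?Q")
proof -
  have shift: "(\<lambda>\<delta>. v d + \<delta>) ` C \<subseteq> C \<longleftrightarrow> d \<in> ?Q" if "d \<noteq> 0" for d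
  proof
    assume shifted: "(\<lambda>\<delta>. v d + \<delta>) ` C \<subseteq> C"
    show "d \<in> ?Q"
      unfolding colon_def
    proof clarify
      fix y assume "y \<in> I_cut v C"
      with shifted that show "d * y \<in> I_cut v C"
        unfolding I_cut_def by (cases "y = 0") (auto simp: valuation_mult[OF v])
    qed
  next
    assume d: "d \<in> ?Q"
    show "(\<lambda>\<delta>. v d + \<delta>) ` C \<subseteq> C"
    proof clarify
      fix \<delta> assume "\<delta> \<in> C"
      obtain y where y: "y \<noteq> 0" "v y = \<delta>"
        using valuation_surj[OF v] by blast
      with \<open>\<delta> \<in> C\<close> have "y \<in> I_cut v C"
        unfolding I_cut_def by simp
      with d have "d * y \<in> I_cut v C"
        unfolding colon_def by blast
      with y that show "v d + \<delta> \<in> C"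
        unfolding I_cut_def by (simp add: valuation_mult[OF v])
    qed
  qed
  show ?thesis
    using assms shift[of c] shift[of "inverse c"] shift_image_eq_iff[of "v c" C]
    unfolding O_units_def Delta_cut_def by (simp add: valuation_inverse)
qed

lemma sum_lessThan_split_at:
  fixes f :: "nat \<Rightarrow> 'a::comm_monoid_add"
  assumes "i < n"
  shows "sum f {..<n} = sum f {..<i} + (f i + sum f {i<..<n})"
proof -
  have "sum f {..<n} = sum f {..<i} + sum f {i..<n}"
    using assms by (simp add: lessThan_atLeast0 sum.atLeastLessThan_concat)
  moreover have "sum f {i..<n} = f i + sum f {i<..<n}"
    using assms by (simp add: sum.atLeast_Suc_lessThan atLeastSucLessThan_greaterThanLessThan)
  ultimately show ?thesis
    by simp
qed

lemma upper_triangular_row: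
  assumes "upper_triangular n a" "i < n"
  shows "(\<Sum>j<n. a i j * x j) = a i i * x i + (\<Sum>j\<in>{i<..<n}. a i j * x j)"
  using sum_lessThan_split_at[OF assms(2), of "\<lambda>j. a i j * x j"] assms
  unfolding upper_triangular_def by simp

lemma upper_triangular_solve:
  fixes a :: "nat \<Rightarrow> nat \<Rightarrow> 'k::field"
  assumes "upper_triangular n a" "m \<le> n" "\<forall>i<m. a i i \<noteq> 0"
  shows "\<exists>x. (\<forall>j\<ge>m. x j = z j) \<and> (\<forall>i<m. (\<Sum>j<n. a i j * x j) = y i)"
  using assms(2,3)
proof (induction m arbitrary: z)
  case 0
  show ?case by auto
next
  case (Suc m)
  define t where "t = (\<Sum>j\<in>{m<..<n}. a m j * z j)"
  obtain x where x_eq: "\<forall>j\<ge>m. x j = (z(m := (y m - t) / a m m)) j"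
    and x_solves: "\<forall>i<m. (\<Sum>j<n. a i j * x j) = y i"
    using Suc by (metis Suc_leD less_SucI)
  have "(\<Sum>j\<in>{m<..<n}. a m j * x j) = t"
    unfolding t_def using x_eq by (intro sum.cong) auto
  then have "(\<Sum>j<n. a m j * x j) = y m"
    using upper_triangular_row[OF assms(1), of m x] Suc.prems x_eq by simp
  with x_eq x_solves show ?case
    by (intro exI[of _ x]) (auto simp: less_Suc_eq)
qed

lemma upper_triangular_kernel:
  fixes a :: "nat \<Rightarrow> nat \<Rightarrow> 'k::field"
  assumes "upper_triangular n a" "\<forall>i<n. a i i \<noteq> 0"
    and "\<forall>i. k \<le> i \<longrightarrow> i < n \<longrightarrow> (\<Sum>j<n. a i j * x j) = 0"
  shows "k \<le> j \<Longrightarrow> j < n \<Longrightarrow> x j = 0"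
proof (induction "n - j" arbitrary: j rule: less_induct)
  case less
  then have "(\<Sum>l\<in>{j<..<n}. a j l * x l) = 0"
    by (intro sum.neutral) auto
  then have "a j j * x j = 0"
    using upper_triangular_row[OF assms(1) less.prems(2), of x] assms(3) less.prems by simp
  then show ?case
    using assms(2) less.prems by simp
qed

lemma mat_invertible_kernel:
  fixes a :: "nat \<Rightarrow> nat \<Rightarrow> 'k::field"
  assumes "mat_invertible n a" "\<forall>i<n. (\<Sum>j<n. a i j * x j) = 0" "k < n"
  shows "x k = 0"
proof -
  obtain b where b: "\<forall>i<n. \<forall>j<n. mat_mult n b a i j = (if i = j then 1 else 0)"
    using assms(1) unfolding mat_invertible_def by blast
  have "(\<Sum>j<n. mat_mult n b a k j * x j) = (\<Sum>j<n. if k = j then x j else 0)"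
    using b assms(3) by (intro sum.cong) auto
  then have "x k = (\<Sum>j<n. mat_mult n b a k j * x j)"
    using assms(3) by simp
  also have "\<dots> = (\<Sum>j<n. \<Sum>l<n. b k l * (a l j * x j))"
    unfolding mat_mult_def by (simp add: sum_distrib_right mult.assoc)
  also have "\<dots> = (\<Sum>l<n. b k l * (\<Sum>j<n. a l j * x j))"
    by (subst sum.swap) (simp add: sum_distrib_left)
  also have "\<dots> = 0"
    using assms(2) by simp
  finally show ?thesis .
qed

lemma B_mat_diag_nonzero:
  fixes a :: "nat \<Rightarrow> nat \<Rightarrow> 'k::field"
  assumes "a \<in> B_mat n" "i < n"
  shows "a i i \<noteq> 0"
proof (rule ccontr)
  \<comment> \<open>for the least \<open>k\<close> with \<open>a\<^sub>k\<^sub>k = 0\<close>, back substitution in the rows above \<open>k\<close>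
     yields a kernel vector with \<open>x\<^sub>k = 1\<close>\<close>
  assume "\<not> a i i \<noteq> 0"
  then obtain k where k: "k < n" "a k k = 0" and below: "\<forall>j<k. a j j \<noteq> 0"
    using assms(2) exists_least_iff[of "\<lambda>k. k < n \<and> a k k = 0"] by (metis order.strict_trans)
  have ut: "upper_triangular n a" and inv: "mat_invertible n a"
    using assms(1) unfolding B_mat_def by auto
  obtain x where x_eq: "\<forall>j\<ge>k. x j = ((\<lambda>_. 0)(k := 1)) j"
    and x_solves: "\<forall>i<k. (\<Sum>j<n. a i j * x j) = 0"
    using upper_triangular_solve[OF ut, of k "(\<lambda>_. 0)(k := 1)" "\<lambda>_. 0"] k below by auto
  have "(\<Sum>j<n. a i j * x j) = 0" if "i < n" for i
  proof (cases "i < k")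
    case False
    have "(\<Sum>j\<in>{i<..<n}. a i j * x j) = 0"
      using False x_eq by (intro sum.neutral) auto
    moreover have "a i i * x i = 0"
      using False x_eq k by auto
    ultimately show ?thesis
      using upper_triangular_row[OF ut that] by simp
  qed (use x_solves in auto)
  then have "x k = 0"
    using mat_invertible_kernel[OF inv] k by blast
  then show False
    using x_eq by simp
qed

lemma single_in_Lambda: "j < n \<Longrightarrow> y \<in> I_cut v (C j) \<Longrightarrow> (\<lambda>_. 0)(j := y) \<in> Lambda v n C"
  unfolding Lambda_def by auto

lemma mat_act_single: "i < n \<Longrightarrow> j < n \<Longrightarrow> mat_act n a ((\<lambda>_. 0)(j := y)) i = a i j * y"
  unfolding mat_act_def by (simp add: if_distrib cong: if_cong)

lemma mat_act_Lambda_subset_iff: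
  assumes v: "valuation v" and cuts: "\<forall>i<n. is_cut (C i)"
  shows "mat_act n a ` Lambda v n C \<subseteq> Lambda v n C \<longleftrightarrow>
         (\<forall>i<n. \<forall>j<n. a i j \<in> colon (I_cut v (C i)) (I_cut v (C j)))"
proof
  assume sub: "mat_act n a ` Lambda v n C \<subseteq> Lambda v n C"
  show "\<forall>i<n. \<forall>j<n. a i j \<in> colon (I_cut v (C i)) (I_cut v (C j))"
    unfolding colon_def
  proof clarify
    fix i j y assume "i < n" "j < n" "y \<in> I_cut v (C j)"
    then have "mat_act n a ((\<lambda>_. 0)(j := y)) \<in> Lambda v n C"
      using sub single_in_Lambda by blast
    with \<open>i < n\<close> \<open>j < n\<close> show "a i j * y \<in> I_cut v (C i)"
      unfolding Lambda_def by (simp add: mat_act_single)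
  qed
next
  assume entries: "\<forall>i<n. \<forall>j<n. a i j \<in> colon (I_cut v (C i)) (I_cut v (C j))"
  show "mat_act n a ` Lambda v n C \<subseteq> Lambda v n C"
  proof clarify
    fix x assume x: "x \<in> Lambda v n C"
    have "(\<Sum>j<n. a i j * x j) \<in> I_cut v (C i)" if "i < n" for i
      using entries x that cuts by (intro I_cut_sum[OF v]) (auto simp: Lambda_def colon_def)
    then show "mat_act n a x \<in> Lambda v n C"
      unfolding Lambda_def mat_act_def by simp
  qed
qed

lemma inverse_diag_in_colon_if_Lambda_subset_image:
  assumes ut: "upper_triangular n a" and diag: "\<forall>i<n. a i i \<noteq> 0"
    and sup: "Lambda v n C \<subseteq> mat_act n a ` Lambda v n C" and i: "i < n"
  shows "inverse (a i i) \<in> colon (I_cut v (C i)) (I_cut v (C i))"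
  unfolding colon_def
proof (intro CollectI ballI)
  fix y assume "y \<in> I_cut v (C i)"
  then have "(\<lambda>_. 0)(i := y) \<in> mat_act n a ` Lambda v n C"
    using sup single_in_Lambda[OF i, of y v C] by blast
  then obtain x where x: "x \<in> Lambda v n C" and ax: "mat_act n a x = (\<lambda>_. 0)(i := y)"
    by (metis imageE)
  have rows: "(\<Sum>j<n. a k j * x j) = (if k = i then y else 0)" if "k < n" for k
    using fun_cong[OF ax, of k] that unfolding mat_act_def by simp
  have "x j = 0" if "i < j" "j < n" for j
    using upper_triangular_kernel[OF ut diag, of "Suc i" x] rows that by simp
  then have "(\<Sum>j\<in>{i<..<n}. a i j * x j) = 0"
    by (intro sum.neutral) auto
  then have "a i i * x i = y"
    using upper_triangular_row[OF ut i, of x] rows[OF i] by simp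
  then have "inverse (a i i) * y = x i"
    using diag i by auto
  then show "inverse (a i i) * y \<in> I_cut v (C i)"
    using x i unfolding Lambda_def by simp
qed

lemma Lambda_subset_mat_act_image:
  assumes v: "valuation v" and cuts: "\<forall>i<n. is_cut (C i)"
    and ut: "upper_triangular n a" and diag: "\<forall>i<n. a i i \<noteq> 0"
    and inv: "\<forall>i<n. inverse (a i i) \<in> colon (I_cut v (C i)) (I_cut v (C i))"
    and upper: "\<forall>i j. i < j \<longrightarrow> j < n \<longrightarrow> a i j \<in> colon (I_cut v (C i)) (I_cut v (C j))"
  shows "Lambda v n C \<subseteq> mat_act n a ` Lambda v n C"
proof
  fix y assume y: "y \<in> Lambda v n C"
  obtain x where x_zero: "\<forall>j\<ge>n. x j = 0" and x_solves: "\<forall>i<n. (\<Sum>j<n. a i j * x j) = y i"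
    using upper_triangular_solve[OF ut order.refl diag, of "\<lambda>_. 0" y] by auto
  have "x i \<in> I_cut v (C i)" if "i < n" for i
    using that
  proof (induction "n - i" arbitrary: i rule: less_induct)
    case less
    have "x j \<in> I_cut v (C j)" if "j \<in> {i<..<n}" for j
      using less.hyps[of j] that by auto
    then have "(\<Sum>j\<in>{i<..<n}. a i j * x j) \<in> I_cut v (C i)"
      using upper cuts less.prems by (intro I_cut_sum[OF v]) (auto simp: colon_def)
    then have "y i - (\<Sum>j\<in>{i<..<n}. a i j * x j) \<in> I_cut v (C i)"
      using I_cut_diff[OF v] cuts y less.prems unfolding Lambda_def by simp
    moreover have "a i i * x i = y i - (\<Sum>j\<in>{i<..<n}. a i j * x j)"
      using upper_triangular_row[OF ut less.prems, of x] x_solves less.prems by (simp add: eq_diff_eq)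
    then have "x i = inverse (a i i) * (y i - (\<Sum>j\<in>{i<..<n}. a i j * x j))"
      using diag less.prems by (metis mult.assoc mult.left_neutral left_inverse)
    ultimately show ?case
      using inv less.prems unfolding colon_def by simp
  qed
  then have "x \<in> Lambda v n C"
    using x_zero unfolding Lambda_def by simp
  moreover have "mat_act n a x = y"
    using x_solves y unfolding mat_act_def Lambda_def by auto
  ultimately show "y \<in> mat_act n a ` Lambda v n C"
    by (metis image_eqI)
qed

theorem proposition3p5:
  fixes v :: "'k::field \<Rightarrow> 'g::linordered_ab_group_add"
    and n :: nat and C :: "nat \<Rightarrow> 'g set" and a :: "nat \<Rightarrow> nat \<Rightarrow> 'k"
  assumes "valuation v"
    and "\<forall>i<n. is_cut (C i)"
    and "a \<in> B_mat n"
  shows "a \<in> Stab n (Lambda v n C) \<longleftrightarrow>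
         ((\<forall>i<n. a i i \<in> O_units v (Delta_cut (C i))) \<and>
          (\<forall>i j. i < j \<longrightarrow> j < n \<longrightarrow> a i j \<in> colon (I_cut v (C i)) (I_cut v (C j))))"
proof -
  let ?Q = "\<lambda>i j. colon (I_cut v (C i)) (I_cut v (C j))"
  let ?L = "Lambda v n C"
  have ut: "upper_triangular n a"
    using assms(3) unfolding B_mat_def by simp
  have diag: "\<forall>i<n. a i i \<noteq> 0"
    using B_mat_diag_nonzero[OF assms(3)] by blast
  have "a i j \<in> ?Q i j" if "j < i" "i < n" for i j
    using ut that unfolding upper_triangular_def colon_def by simp
  then have into_iff: "mat_act n a ` ?L \<subseteq> ?L \<longleftrightarrow>
      (\<forall>i<n. a i i \<in> ?Q i i) \<and> (\<forall>i j. i < j \<longrightarrow> j < n \<longrightarrow> a i j \<in> ?Q i j)"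
    unfolding mat_act_Lambda_subset_iff[OF assms(1,2)] by (auto dest: less_trans) (metis linorder_neqE_nat)
  have units_iff: "(\<forall>i<n. a i i \<in> O_units v (Delta_cut (C i))) \<longleftrightarrow>
      (\<forall>i<n. a i i \<in> ?Q i i \<and> inverse (a i i) \<in> ?Q i i)"
    using O_units_Delta_cut_iff[OF assms(1)] diag by auto
  have stab_iff: "a \<in> Stab n ?L \<longleftrightarrow> mat_act n a ` ?L \<subseteq> ?L \<and> ?L \<subseteq> mat_act n a ` ?L"
    using assms(3) unfolding Stab_def by auto
  show ?thesis
    unfolding stab_iff units_iff into_iff
    using inverse_diag_in_colon_if_Lambda_subset_image[OF ut diag]
      Lambda_subset_mat_act_image[OF assms(1,2) ut diag]
    by auto
qed

end
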